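(* Let $M$ be a positive integer and let $K$ be an integer with $q_{KL}-1\le K\le M$. Then \[\mathcal U(M)\cap\mathcal U(K)=(1,K+1]\cap\mathcal U(M).\]
   Context: For a positive integer $J$, $\mathcal U(J)$ is the set of $q\in(1,J+1]$ such that $1$ has exactly one expansion $1=\sum_{i\ge1}d_iq^{-i}$ with $d_i\in\{0,1,\dots,J\}$. For $q\in(1,M+1]$, $\alpha(q)$ is the quasi-greedy $q$-expansion of $1$ over $\{0,1,\dots,M\}$ (lexicographically largest sequence not ending in $0^\infty$ with $\sum a_iq^{-i}=1$). Let $(\tau_i)_{i\ge0}$ be the Thue–Morse sequence; $q_{KL}=q_{KL}(M)$ is the base with $\alpha(q_{KL})=\lambda_1\lambda_2\dots$, $\lambda_i=k+\tau_i-\tau_{i-1}$ if $M=2k$, $\lambda_i=k+\tau_i$ if $M=2k+1$. *)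

theory Defs
  imports Complex_Main
begin

text \<open>Sequences are indexed from 0: d i is the digit d_(i+1), weighted by q^-(i+1).\<close>

definition expansion :: "nat \<Rightarrow> real \<Rightarrow> (nat \<Rightarrow> nat) \<Rightarrow> bool" where
  "expansion J q d \<longleftrightarrow> (\<forall>i. d i \<le> J) \<and> (\<lambda>i. real (d i) / q ^ Suc i) sums 1"

definition univoque :: "nat \<Rightarrow> real set" where
  "univoque J = {q. 1 < q \<and> q \<le> real J + 1 \<and> (\<exists>!d. expansion J q d)}"

definition lex_less :: "(nat \<Rightarrow> nat) \<Rightarrow> (nat \<Rightarrow> nat) \<Rightarrow> bool" where
  "lex_less a b \<longleftrightarrow> (\<exists>n. (\<forall>i<n. a i = b i) \<and> a n < b n)"

definition quasi_greedy :: "nat \<Rightarrow> real \<Rightarrow> (nat \<Rightarrow> nat) \<Rightarrow> bool" where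
  "quasi_greedy M q a \<longleftrightarrow> expansion M q a \<and> infinite {i. a i \<noteq> 0} \<and>
     (\<forall>b. expansion M q b \<and> infinite {i. b i \<noteq> 0} \<longrightarrow> \<not> lex_less a b)"

definition alpha :: "nat \<Rightarrow> real \<Rightarrow> (nat \<Rightarrow> nat)" where
  "alpha M q = (THE a. quasi_greedy M q a)"

fun thue_morse :: "nat \<Rightarrow> nat" where
  "thue_morse n = (if n = 0 then 0 else (thue_morse (n div 2) + n mod 2) mod 2)"

text \<open>lambda_seq M i = \<lambda>_(i+1).\<close>
definition lambda_seq :: "nat \<Rightarrow> nat \<Rightarrow> nat" where
  "lambda_seq M i = (if even M
     then nat (int (M div 2) + int (thue_morse (Suc i)) - int (thue_morse i))
     else M div 2 + thue_morse (Suc i))"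

definition q_KL :: "nat \<Rightarrow> real" where
  "q_KL M = (THE q. 1 < q \<and> q \<le> real M + 1 \<and> alpha M q = lambda_seq M)"

end

theory Submission
  imports Defs "HOL-Analysis.Elementary_Normed_Spaces"
begin

text \<open>
  Let \<open>q \<le> K + 1\<close> and let \<open>d\<close> be the unique expansion of 1 in base \<open>q\<close> over the
  digits \<open>{0..M}\<close>. Uniqueness forbids lowering any nonzero digit \<open>d\<^sub>m\<close> by one and
  re-expanding the tail greedily, so the tail after \<open>d\<^sub>m\<close> exceeds \<open>M/(q-1) - 1\<close>;
  likewise raising a digit \<open>d\<^sub>m < M\<close> is impossible, so the tail after it is below 1.
  A digit \<open>d\<^sub>m > K\<close> would then make the value of the tail starting at \<open>d\<^sub>m\<close> exceed
  \<open>(K + M/(q-1))/q \<ge> 1\<close>, whereas by induction every tail starting at a digit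
  \<open>\<le> K < M\<close> is below 1. Hence \<open>d\<close> only uses the digits \<open>{0..K}\<close> and is also the unique
  expansion over them. This works for every \<open>K \<le> M\<close>.
\<close>

definition digit_value :: "real \<Rightarrow> (nat \<Rightarrow> nat) \<Rightarrow> real" where
  "digit_value q e = (\<Sum>i. real (e i) / q ^ Suc i)"

lemma const_digits_sums:
  fixes q :: real
  assumes "q > 1"
  shows "(\<lambda>i. real M / q ^ Suc i) sums (real M / (q - 1))"
proof -
  have "(\<lambda>i. (1/q) ^ i) sums (1 / (1 - 1/q))"
    using assms by (intro geometric_sums) auto
  then have "(\<lambda>i. (real M / q) * (1/q) ^ i) sums ((real M / q) * (1 / (1 - 1/q)))"
    by (rule sums_mult)
  moreover have "(real M / q) * (1 / (1 - 1/q)) = real M / (q - 1)"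
    using assms by (simp add: field_simps)
  moreover have "(\<lambda>i. (real M / q) * (1/q) ^ i) = (\<lambda>i. real M / q ^ Suc i)"
    by (rule ext) (simp add: field_simps power_divide)
  ultimately show ?thesis by metis
qed

lemma
  assumes "q > 1" "\<forall>i. e i \<le> M"
  shows summable_digits: "summable (\<lambda>i. real (e i) / q ^ Suc i)"
    and digit_value_nonneg: "0 \<le> digit_value q e"
    and digit_value_le: "digit_value q e \<le> real M / (q - 1)"
proof -
  have le: "\<And>i. norm (real (e i) / q ^ Suc i) \<le> real M / q ^ Suc i"
    using assms by (auto intro!: divide_right_mono)
  have sM: "summable (\<lambda>i. real M / q ^ Suc i)"
    using const_digits_sums[OF assms(1)] sums_summable by blast
  show s: "summable (\<lambda>i. real (e i) / q ^ Suc i)"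
    by (rule summable_comparison_test[OF _ sM]) (use le in auto)
  show "0 \<le> digit_value q e" unfolding digit_value_def
    using assms by (intro suminf_nonneg[OF s]) auto
  have "digit_value q e \<le> (\<Sum>i. real M / q ^ Suc i)" unfolding digit_value_def
    using le assms by (intro suminf_le[OF _ s sM]) (auto intro!: divide_right_mono)
  also have "\<dots> = real M / (q - 1)"
    using const_digits_sums[OF assms(1)] sums_unique by metis
  finally show "digit_value q e \<le> real M / (q - 1)" .
qed

lemma digits_sums_split:
  assumes "q > 1" "\<forall>i. e i \<le> M"
  shows "(\<lambda>i. real (e i) / q ^ Suc i) sums
     ((\<Sum>i<k. real (e i) / q ^ Suc i) + digit_value q (\<lambda>i. e (k + i)) / q ^ k)"
proof -
  have s: "summable (\<lambda>i. real (e i) / q ^ Suc i)" using summable_digits[OF assms] .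
  have s_tail: "summable (\<lambda>i. real (e (k + i)) / q ^ Suc i)"
    using assms by (intro summable_digits) auto
  have shift: "(\<lambda>i. real (e (i + k)) / q ^ Suc (i + k))
      = (\<lambda>i. (real (e (k + i)) / q ^ Suc i) / q ^ k)"
    by (rule ext) (simp add: power_add add.commute mult.commute)
  have "(\<Sum>i. real (e i) / q ^ Suc i)
     = (\<Sum>i. real (e (i + k)) / q ^ Suc (i + k)) + (\<Sum>i<k. real (e i) / q ^ Suc i)"
    using suminf_split_initial_segment[OF s, of k] by simp
  also have "(\<Sum>i. real (e (i + k)) / q ^ Suc (i + k)) = digit_value q (\<lambda>i. e (k + i)) / q ^ k"
    unfolding shift digit_value_def using suminf_divide[OF s_tail, of "q ^ k"] by simp
  finally show ?thesis using summable_sums[OF s] by (simp add: add.commute)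
qed

lemma digit_value_Suc_shift:
  assumes "q > 1" "\<forall>i. e i \<le> M"
  shows "digit_value q e = (real (e 0) + digit_value q (\<lambda>i. e (Suc i))) / q"
  using sums_unique[OF digits_sums_split[OF assms, of 1]]
  by (simp add: digit_value_def add_divide_distrib)

lemma expansion_digit_value: "expansion M q d \<Longrightarrow> digit_value q d = 1"
  unfolding expansion_def digit_value_def by (simp add: sums_unique[symmetric])

lemma expansion_mono: "expansion K q d \<Longrightarrow> K \<le> M \<Longrightarrow> expansion M q d"
  unfolding expansion_def using le_trans by blast


definition greedy_digit :: "nat \<Rightarrow> real \<Rightarrow> real \<Rightarrow> nat" where
  "greedy_digit M q y = min M (nat \<lfloor>q * y\<rfloor>)"

fun greedy_rem :: "nat \<Rightarrow> real \<Rightarrow> real \<Rightarrow> nat \<Rightarrow> real" where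
  "greedy_rem M q x 0 = x"
| "greedy_rem M q x (Suc k) = q * greedy_rem M q x k - real (greedy_digit M q (greedy_rem M q x k))"

lemma greedy_rem_bounds:
  assumes "q > 1" "q \<le> real M + 1" "0 \<le> x" "x \<le> real M / (q - 1)"
  shows "0 \<le> greedy_rem M q x k \<and> greedy_rem M q x k \<le> real M / (q - 1)"
proof (induction k)
  case 0 then show ?case using assms by simp
next
  case (Suc k)
  define y where "y = greedy_rem M q x k"
  have y: "0 \<le> y" "y \<le> real M / (q - 1)" using Suc y_def by auto
  have qy: "q * y \<ge> 0" using y assms by simp
  have one: "1 \<le> real M / (q - 1)" using assms by (simp add: field_simps)
  show ?case
  proof (cases "\<lfloor>q * y\<rfloor> \<ge> int M")
    case True
    then have digit: "greedy_digit M q y = M" unfolding greedy_digit_def by simp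
    have "q * y \<le> q * (real M / (q - 1))" using y assms by (intro mult_left_mono) auto
    also have "q * (real M / (q - 1)) = real M + real M / (q - 1)"
      using assms by (simp add: field_simps)
    finally have "q * y - real M \<le> real M / (q - 1)" by simp
    moreover have "q * y \<ge> real M" using True by linarith
    ultimately show ?thesis using digit y_def by simp
  next
    case False
    then have "real (greedy_digit M q y) = of_int \<lfloor>q * y\<rfloor>"
      unfolding greedy_digit_def using qy by simp
    moreover have "q * y - of_int \<lfloor>q * y\<rfloor> < 1" "0 \<le> q * y - of_int \<lfloor>q * y\<rfloor>" by linarith+
    ultimately show ?thesis using y_def one by simp
  qed
qed

lemma greedy_rem_partial_sum:
  assumes "q > 1"
  shows "x = (\<Sum>i<k. real (greedy_digit M q (greedy_rem M q x i)) / q ^ Suc i)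
           + greedy_rem M q x k / q ^ k"
proof (induction k)
  case 0 then show ?case by simp
next
  case (Suc k)
  have "greedy_rem M q x (Suc k) / q ^ Suc k
      = greedy_rem M q x k / q ^ k - real (greedy_digit M q (greedy_rem M q x k)) / q ^ Suc k"
    using assms by (simp add: field_simps)
  then show ?case using Suc by simp
qed

lemma exists_digits_with_value:
  assumes "q > 1" "q \<le> real M + 1" "0 \<le> x" "x \<le> real M / (q - 1)"
  shows "\<exists>e. (\<forall>i. e i \<le> M) \<and> digit_value q e = x"
proof -
  define e where "e i = greedy_digit M q (greedy_rem M q x i)" for i
  have e_le: "\<forall>i. e i \<le> M" unfolding e_def greedy_digit_def by simp
  have "(\<lambda>k. greedy_rem M q x k / q ^ k) \<longlonglongrightarrow> 0"
  proof (rule Lim_null_comparison)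
    show "\<forall>\<^sub>F k in sequentially.
        norm (greedy_rem M q x k / q ^ k) \<le> real M / (q - 1) * (1/q) ^ k"
      using greedy_rem_bounds[OF assms] assms
      by (intro always_eventually allI) (simp add: power_divide divide_right_mono flip: divide_divide_eq_left)
    have "(\<lambda>k. (1/q) ^ k) \<longlonglongrightarrow> 0" using assms by (intro LIMSEQ_power_zero) auto
    then show "(\<lambda>k. real M / (q - 1) * (1/q) ^ k) \<longlonglongrightarrow> 0"
      by (rule tendsto_mult_right_zero)
  qed
  then have "(\<lambda>k. x - greedy_rem M q x k / q ^ k) \<longlonglongrightarrow> x - 0"
    by (intro tendsto_diff tendsto_const)
  moreover have "x - greedy_rem M q x k / q ^ k = (\<Sum>i<k. real (e i) / q ^ Suc i)" for k
    using greedy_rem_partial_sum[OF assms(1), of x] unfolding e_def by (metis add_diff_cancel_right')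
  ultimately have "(\<lambda>i. real (e i) / q ^ Suc i) sums x" unfolding sums_def by simp
  then show ?thesis using e_le unfolding digit_value_def by (metis sums_unique)
qed


lemma expansion_replace_tail:
  assumes q: "q > 1" and d: "expansion M q d" and t: "t \<le> M" and e: "\<forall>i. e i \<le> M"
    and same_value: "real t + digit_value q e = real (d n) + digit_value q (\<lambda>i. d (Suc n + i))"
  shows "expansion M q (\<lambda>i. if i < n then d i else if i = n then t else e (i - Suc n))"
    (is "expansion M q ?d")
proof -
  have d_le: "\<forall>i. d i \<le> M" and d_sums: "(\<lambda>i. real (d i) / q ^ Suc i) sums 1"
    using d unfolding expansion_def by auto
  have d'_le: "\<forall>i. ?d i \<le> M" using d_le t e by auto
  have prefix: "(\<Sum>i<n. real (?d i) / q ^ Suc i) = (\<Sum>i<n. real (d i) / q ^ Suc i)"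
    by (rule sum.cong) auto
  have "(\<Sum>i<Suc n. real (?d i) / q ^ Suc i) + digit_value q (\<lambda>i. ?d (Suc n + i)) / q ^ Suc n
      = (\<Sum>i<n. real (d i) / q ^ Suc i) + (real t + digit_value q e) / q ^ Suc n"
    using prefix by (simp add: add_divide_distrib)
  also have "\<dots> = (\<Sum>i<Suc n. real (d i) / q ^ Suc i)
                   + digit_value q (\<lambda>i. d (Suc n + i)) / q ^ Suc n"
    using same_value by (simp add: add_divide_distrib)
  also have "\<dots> = 1"
    using digits_sums_split[OF q d_le] d_sums sums_unique2 by blast
  finally show ?thesis
    using digits_sums_split[OF q d'_le, of "Suc n"] d'_le unfolding expansion_def by simp
qed

lemma unique_expansion_tail_gt:
  assumes q: "q > 1" "q \<le> real M + 1" and d: "expansion M q d"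
    and unique: "\<forall>e. expansion M q e \<longrightarrow> e = d" and pos: "d m > 0"
  shows "digit_value q (\<lambda>i. d (Suc m + i)) > real M / (q - 1) - 1"
proof (rule ccontr)
  assume "\<not> ?thesis"
  moreover have "0 \<le> digit_value q (\<lambda>i. d (Suc m + i))"
    using d q(1) digit_value_nonneg[of q "\<lambda>i. d (Suc m + i)" M] unfolding expansion_def by simp
  ultimately have "0 \<le> digit_value q (\<lambda>i. d (Suc m + i)) + 1"
    and "digit_value q (\<lambda>i. d (Suc m + i)) + 1 \<le> real M / (q - 1)"
    by linarith+
  then obtain e where e: "\<forall>i. e i \<le> M" "digit_value q e = digit_value q (\<lambda>i. d (Suc m + i)) + 1"
    using exists_digits_with_value[OF q] by blast
  have "d m \<le> M" using d unfolding expansion_def by auto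
  have "expansion M q (\<lambda>i. if i < m then d i else if i = m then d m - 1 else e (i - Suc m))"
    (is "expansion M q ?d")
  proof (rule expansion_replace_tail[OF q(1) d _ e(1)])
    show "d m - 1 \<le> M" using \<open>d m \<le> M\<close> by simp
    show "real (d m - 1) + digit_value q e = real (d m) + digit_value q (\<lambda>i. d (Suc m + i))"
      using pos e(2) by (simp add: of_nat_diff)
  qed
  then have "?d = d" using unique by blast
  then have "?d m = d m" by (rule fun_cong)
  then show False using pos by simp
qed

lemma unique_expansion_tail_lt:
  assumes q: "q > 1" "q \<le> real M + 1" and d: "expansion M q d"
    and unique: "\<forall>e. expansion M q e \<longrightarrow> e = d" and less: "d m < M"
  shows "digit_value q (\<lambda>i. d (Suc m + i)) < 1"
proof (rule ccontr)
  assume "\<not> ?thesis"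
  moreover have "digit_value q (\<lambda>i. d (Suc m + i)) \<le> real M / (q - 1)"
    using d q(1) unfolding expansion_def by (intro digit_value_le) auto
  ultimately have "0 \<le> digit_value q (\<lambda>i. d (Suc m + i)) - 1"
    and "digit_value q (\<lambda>i. d (Suc m + i)) - 1 \<le> real M / (q - 1)"
    by linarith+
  then obtain e where e: "\<forall>i. e i \<le> M" "digit_value q e = digit_value q (\<lambda>i. d (Suc m + i)) - 1"
    using exists_digits_with_value[OF q] by blast
  have "expansion M q (\<lambda>i. if i < m then d i else if i = m then d m + 1 else e (i - Suc m))"
    (is "expansion M q ?d")
  proof (rule expansion_replace_tail[OF q(1) d _ e(1)])
    show "d m + 1 \<le> M" using less by simp
    show "real (d m + 1) + digit_value q e = real (d m) + digit_value q (\<lambda>i. d (Suc m + i))"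
      using e(2) by simp
  qed
  then have "?d = d" using unique by blast
  then have "?d m = d m" by (rule fun_cong)
  then show False by simp
qed

lemma unique_expansion_digits_le:
  assumes q: "q > 1" "q \<le> real K + 1" and "K \<le> M" and d: "expansion M q d"
    and unique: "\<forall>e. expansion M q e \<longrightarrow> e = d"
  shows "d n \<le> K"
proof (cases "K = M")
  case True then show ?thesis using d unfolding expansion_def by simp
next
  case False
  then have KM: "K < M" using \<open>K \<le> M\<close> by simp
  have qM: "q \<le> real M + 1" using q KM by simp
  define r where "r n = digit_value q (\<lambda>i. d (n + i))" for n
  have r_Suc: "r n = (real (d n) + r (Suc n)) / q" for n
    using digit_value_Suc_shift[OF q(1), of "\<lambda>i. d (n + i)" M] d
    unfolding r_def expansion_def by simp
  have large_digit: "r m > 1" if "d m \<ge> K + 1" for m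
  proof -
    have "r (Suc m) > real M / (q - 1) - 1"
      using unique_expansion_tail_gt[OF q(1) qM d unique] that unfolding r_def by simp
    moreover have "1 \<le> real M / (q - 1)" using q(1) qM by (simp add: field_simps)
    ultimately have "real (d m) + r (Suc m) > q" using that q(2) by simp
    moreover have "q * r m = real (d m) + r (Suc m)" using r_Suc[of m] q(1) by simp
    ultimately have "q * 1 < q * r m" by simp
    then show ?thesis using q(1) by (simp add: mult_less_cancel_left_pos)
  qed
  show ?thesis
  proof (induction n)
    case 0
    have "r 0 = 1" using expansion_digit_value[OF d] unfolding r_def by simp
    then show ?case using large_digit[of 0] by fastforce
  next
    case (Suc n)
    then have "r (Suc n) < 1"
      using unique_expansion_tail_lt[OF q(1) qM d unique] KM unfolding r_def by simp
    then show ?case using large_digit[of "Suc n"] by fastforce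
  qed
qed

lemma univoque_inter_of_le:
  assumes "K \<le> M"
  shows "univoque M \<inter> univoque K = {1<..real K + 1} \<inter> univoque M"
proof
  show "univoque M \<inter> univoque K \<subseteq> {1<..real K + 1} \<inter> univoque M"
    unfolding univoque_def by auto
next
  show "{1<..real K + 1} \<inter> univoque M \<subseteq> univoque M \<inter> univoque K"
  proof
    fix q assume q_in: "q \<in> {1<..real K + 1} \<inter> univoque M"
    then have q: "q > 1" "q \<le> real K + 1" and "\<exists>!d. expansion M q d"
      unfolding univoque_def by auto
    then obtain d where d: "expansion M q d" and unique: "\<forall>e. expansion M q e \<longrightarrow> e = d"
      by blast
    have "expansion K q d"
      using d unique_expansion_digits_le[OF q assms d unique] unfolding expansion_def by simp
    moreover have "e = d" if "expansion K q e" for e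
      using unique expansion_mono[OF that assms] by blast
    ultimately have "\<exists>!d. expansion K q d" by blast
    then show "q \<in> univoque M \<inter> univoque K" using q_in q unfolding univoque_def by auto
  qed
qed

theorem lemma7p2:
  fixes M K :: nat
  assumes "M \<ge> 1" and "q_KL M - 1 \<le> real K" and "K \<le> M"
  shows "univoque M \<inter> univoque K = {1<..real K + 1} \<inter> univoque M"
  using univoque_inter_of_le[OF assms(3)] .

end
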